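(* Let $f$ be an axis rule defined for profiles over every finite candidate set, satisfying resistance to cloning, and suppose there are constants $h^*_m,h_m>0$ ($m\ge3$) such that for every finite $C$ with $|C|=m$, $f$ restricted to profiles over $C$ is the scoring rule with $\mathrm{cost}(A,\triangleleft)=0$ if $A$ is an interval of $\triangleleft$, $\mathrm{cost}(A,\triangleleft)=h^*_m$ if $A$ is not an interval of $\triangleleft$ and contains both the leftmost and rightmost candidate of $\triangleleft$, and $\mathrm{cost}(A,\triangleleft)=h_m$ otherwise. Then $h^*_m\ge h_m$ for all $m\ge6$.
   Context: Candidates come from a fixed infinite universe. An approval ballot is a nonempty subset $A\subseteq C$; a profile over $C$ is a finite sequence of ballots. An axis is a strict linear order $\triangleleft$ on $C$. A ballot $A$ is an interval of $\triangleleft$ if for all $a,b\in A$ and every $c$ with $a\triangleleft c\triangleleft b$ we have $c\in A$. The scoring rule with cost $\mathrm{cost}$ returns $\arg\min_{\triangleleft}\sum_{A\in P}\mathrm{cost}(A,\triangleleft)$. Two candidates $a,a'$ are clones in $P$ if for every $A\in P$, $a\in A$ iff $a'\in A$. $P_{-c}$ is the profile over $C\setminus\{c\}$ obtained by removing $c$ from every ballot (ballots becoming empty are discarded); $\triangleleft_{-c}$ is the restriction of $\triangleleft$ to $C\setminus\{c\}$. Resistance to cloning: for every profile $P$ with clones $a,a'$, (1) for every $\triangleleft\in f(P)$, $\triangleleft_{-a}\in f(P_{-a})$, and (2) for every $\triangleleft^*\in f(P_{-a})$ there is $\triangleleft\in f(P)$ with $\triangleleft_{-a}=\triangleleft^*$.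 *)

theory Defs
  imports Complex_Main
begin

text \<open>Ballots are sets of candidates, profiles are lists of ballots, axes are strict
linear orders, represented as relations r (with (a,b) in r meaning a is left of b).\<close>

definition profile_over :: "'c set \<Rightarrow> 'c set list \<Rightarrow> bool" where
  "profile_over C P \<longleftrightarrow> (\<forall>A\<in>set P. A \<noteq> {} \<and> A \<subseteq> C)"

definition axes :: "'c set \<Rightarrow> 'c rel set" where
  "axes C = {r. strict_linear_order_on C r \<and> r \<subseteq> C \<times> C}"

definition is_interval :: "'c set \<Rightarrow> 'c rel \<Rightarrow> bool" where
  "is_interval A r \<longleftrightarrow> (\<forall>a\<in>A. \<forall>b\<in>A. \<forall>c. (a, c) \<in> r \<and> (c, b) \<in> r \<longrightarrow> c \<in> A)"

definition is_leftmost :: "'c set \<Rightarrow> 'c rel \<Rightarrow> 'c \<Rightarrow> bool" where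
  "is_leftmost C r x \<longleftrightarrow> x \<in> C \<and> (\<forall>y\<in>C. (y, x) \<notin> r)"

definition is_rightmost :: "'c set \<Rightarrow> 'c rel \<Rightarrow> 'c \<Rightarrow> bool" where
  "is_rightmost C r x \<longleftrightarrow> x \<in> C \<and> (\<forall>y\<in>C. (x, y) \<notin> r)"

definition scoring_rule :: "('c set \<Rightarrow> 'c rel \<Rightarrow> real) \<Rightarrow> 'c set \<Rightarrow> 'c set list \<Rightarrow> 'c rel set" where
  "scoring_rule cost C P =
     {r \<in> axes C. \<forall>r' \<in> axes C. (\<Sum>A\<leftarrow>P. cost A r) \<le> (\<Sum>A\<leftarrow>P. cost A r')}"

definition interval_cost :: "'c set \<Rightarrow> real \<Rightarrow> real \<Rightarrow> 'c set \<Rightarrow> 'c rel \<Rightarrow> real" where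
  "interval_cost C hs h A r =
     (if is_interval A r then 0
      else if (\<exists>x\<in>A. is_leftmost C r x) \<and> (\<exists>y\<in>A. is_rightmost C r y) then hs
      else h)"

definition clones :: "'c set list \<Rightarrow> 'c \<Rightarrow> 'c \<Rightarrow> bool" where
  "clones P a a' \<longleftrightarrow> (\<forall>A\<in>set P. a \<in> A \<longleftrightarrow> a' \<in> A)"

definition remove_cand :: "'c \<Rightarrow> 'c set list \<Rightarrow> 'c set list" where
  "remove_cand c P = filter (\<lambda>A. A \<noteq> {}) (map (\<lambda>A. A - {c}) P)"

definition restrict_axis :: "'c \<Rightarrow> 'c rel \<Rightarrow> 'c rel" where
  "restrict_axis c r = {(x, y) \<in> r. x \<noteq> c \<and> y \<noteq> c}"

definition resistant_to_cloning :: "('c set \<Rightarrow> 'c set list \<Rightarrow> 'c rel set) \<Rightarrow> bool" where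
  "resistant_to_cloning f \<longleftrightarrow>
     (\<forall>C P a a'. finite C \<and> profile_over C P \<and> a \<in> C \<and> a' \<in> C \<and> a \<noteq> a' \<and> clones P a a' \<longrightarrow>
        (\<forall>r\<in>f C P. restrict_axis a r \<in> f (C - {a}) (remove_cand a P)) \<and>
        (\<forall>r'\<in>f (C - {a}) (remove_cand a P). \<exists>r\<in>f C P. restrict_axis a r = r'))"

end

theory Submission
  imports Defs
begin

text \<open>Suppose \<open>h* < h\<close>. For a profile \<open>[B, {y1,y2}, {y2,y3}]\<close> with \<open>y1, y3 \<in> B\<close>
and \<open>y2 \<notin> B\<close> no axis makes all three ballots intervals, so every axis costs at least \<open>h*\<close>,
and an axis on which only \<open>B\<close> fails, stretching from end to end, is optimal. With
\<open>B = {x,a,y1,y3}\<close> the axis \<open>a u \<dots> x y1 y2 y3\<close> is optimal and \<open>a, x\<close> are clones.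
Deleting \<open>a\<close> gives the same profile as deleting \<open>a\<close> from \<open>[{x,y1,y3}, {y1,y2}, {y2,y3}]\<close>,
where \<open>a, u\<close> are clones (neither occurs). Resistance to cloning thus yields an optimal axis for the
latter profile with \<open>u\<close> left of \<open>x, y1, y3\<close> and \<open>y1 y2 y3\<close> in order, on which \<open>{x,y1,y3}\<close>
costs \<open>h\<close>; but the axis \<open>x a u \<dots> y1 y2 y3\<close> costs only \<open>h*\<close>.\<close>

fun list_axis :: "'c list \<Rightarrow> 'c rel" where
  "list_axis [] = {}"
| "list_axis (x # xs) = {x} \<times> set xs \<union> list_axis xs"

lemma list_axis_subset: "list_axis xs \<subseteq> set xs \<times> set xs"
  by (induction xs) auto

lemma list_axis_append:
  "list_axis (us @ vs) = list_axis us \<union> set us \<times> set vs \<union> list_axis vs"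
  by (induction us) auto

lemma list_axis_in_axes:
  assumes "distinct xs"
  shows "list_axis xs \<in> axes (set xs)"
proof -
  have "trans (list_axis xs)"
    using assms
  proof (induction xs)
    case (Cons x xs)
    show ?case
    proof (rule transI)
      fix p q r
      assume "(p, q) \<in> list_axis (x # xs)" "(q, r) \<in> list_axis (x # xs)"
      then show "(p, r) \<in> list_axis (x # xs)"
        using Cons list_axis_subset[of xs] by (auto dest: transD)
    qed
  qed simp
  moreover have "irrefl (list_axis xs)"
    using assms
  proof (induction xs)
    case (Cons x xs)
    then show ?case using list_axis_subset[of xs] by (auto simp: irrefl_def)
  qed simp
  moreover have "total_on (set xs) (list_axis xs)"
    by (induction xs) (auto simp: total_on_def)
  ultimately show ?thesis
    using list_axis_subset unfolding axes_def strict_linear_order_on_def by blast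
qed

lemma is_leftmost_list_axis:
  assumes "distinct (x # xs)"
  shows "is_leftmost (set (x # xs)) (list_axis (x # xs)) x"
  using assms list_axis_subset[of xs] unfolding is_leftmost_def by auto

lemma is_rightmost_list_axis:
  assumes "distinct (xs @ [y])"
  shows "is_rightmost (set (xs @ [y])) (list_axis (xs @ [y])) y"
  using assms list_axis_subset[of xs] unfolding is_rightmost_def list_axis_append by auto

lemma is_interval_list_axis_consecutive:
  assumes "distinct (us @ p # q # vs)"
  shows "is_interval {p, q} (list_axis (us @ p # q # vs))"
  using assms list_axis_subset[of us] list_axis_subset[of vs]
  unfolding is_interval_def list_axis_append by auto

lemma interval_cost_nonneg:
  assumes "0 \<le> hs" "0 \<le> h"
  shows "0 \<le> interval_cost C hs h A r"
  using assms unfolding interval_cost_def by auto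

lemma interval_cost_interval:
  "is_interval A r \<Longrightarrow> interval_cost C hs h A r = 0"
  unfolding interval_cost_def by simp

lemma interval_cost_not_interval_ge:
  assumes "\<not> is_interval A r"
  shows "min hs h \<le> interval_cost C hs h A r"
  using assms unfolding interval_cost_def by auto

lemma interval_cost_spanning_le:
  assumes "0 \<le> hs" "x \<in> A" "is_leftmost C r x" "y \<in> A" "is_rightmost C r y"
  shows "interval_cost C hs h A r \<le> hs"
  using assms unfolding interval_cost_def by auto

lemma interval_cost_no_leftmost:
  assumes "\<not> is_interval A r" "\<not> (\<exists>x\<in>A. is_leftmost C r x)"
  shows "interval_cost C hs h A r = h"
  using assms unfolding interval_cost_def by auto

lemma axis_middle_of_interval_pairs:
  assumes "r \<in> axes C" "y1 \<in> C" "y2 \<in> C" "y3 \<in> C" "distinct [y1, y2, y3]"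
    and "is_interval {y1, y2} r" "is_interval {y2, y3} r"
  shows "(y1, y2) \<in> r \<and> (y2, y3) \<in> r \<or> (y3, y2) \<in> r \<and> (y2, y1) \<in> r"
proof -
  have "trans r" "total_on C r"
    using assms(1) unfolding axes_def strict_linear_order_on_def by auto
  then show ?thesis
    using assms(2-) unfolding is_interval_def total_on_def trans_def by auto metis+
qed

definition path_profile :: "'c set \<Rightarrow> 'c \<Rightarrow> 'c \<Rightarrow> 'c \<Rightarrow> 'c set list" where
  "path_profile B y1 y2 y3 = [B, {y1, y2}, {y2, y3}]"

lemma path_profile_cost_ge_min:
  assumes "r \<in> axes C" "y1 \<in> C" "y2 \<in> C" "y3 \<in> C" "distinct [y1, y2, y3]"
    and "y1 \<in> B" "y3 \<in> B" "y2 \<notin> B" "0 \<le> hs" "0 \<le> h"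
  shows "min hs h \<le> (\<Sum>A\<leftarrow>path_profile B y1 y2 y3. interval_cost C hs h A r)"
proof -
  have "\<not> (is_interval {y1, y2} r \<and> is_interval {y2, y3} r \<and> is_interval B r)"
    using axis_middle_of_interval_pairs[OF assms(1-5)] assms(6-8)
    unfolding is_interval_def by blast
  then show ?thesis
    using interval_cost_not_interval_ge[where r = r and C = C and hs = hs and h = h]
      interval_cost_nonneg[OF assms(9,10), where C = C and r = r]
    unfolding path_profile_def by (auto intro: add_increasing add_increasing2)
qed

lemma path_profile_cost_le:
  assumes "is_interval {y1, y2} r" "is_interval {y2, y3} r"
    and "x \<in> B" "is_leftmost C r x" "y \<in> B" "is_rightmost C r y" "0 \<le> hs"
  shows "(\<Sum>A\<leftarrow>path_profile B y1 y2 y3. interval_cost C hs h A r) \<le> hs"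
  using interval_cost_spanning_le[OF assms(7,3-6)]
  by (simp add: path_profile_def interval_cost_interval assms(1,2))

lemma path_profile_cost_ge_h:
  assumes "(y1, y2) \<in> r" "(y2, y3) \<in> r" "y1 \<in> B" "y3 \<in> B" "y2 \<notin> B"
    and "u \<in> C" "\<And>z. z \<in> B \<Longrightarrow> (u, z) \<in> r" "0 \<le> hs" "0 \<le> h"
  shows "h \<le> (\<Sum>A\<leftarrow>path_profile B y1 y2 y3. interval_cost C hs h A r)"
proof -
  have "interval_cost C hs h B r = h"
  proof (rule interval_cost_no_leftmost)
    show "\<not> is_interval B r"
      using assms(1-5) unfolding is_interval_def by blast
    show "\<not> (\<exists>x\<in>B. is_leftmost C r x)"
      using assms(6,7) unfolding is_leftmost_def by blast
  qed
  then show ?thesis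
    using interval_cost_nonneg[OF assms(8,9), where C = C and r = r]
    unfolding path_profile_def by (simp add: add_increasing)
qed

lemma mem_restrict_axis: "(p, q) \<in> restrict_axis c r \<longleftrightarrow> (p, q) \<in> r \<and> p \<noteq> c \<and> q \<noteq> c"
  unfolding restrict_axis_def by simp

lemma resistant_to_cloningD:
  assumes "resistant_to_cloning f" "finite C" "profile_over C P"
    and "a \<in> C" "a' \<in> C" "a \<noteq> a'" "clones P a a'"
  shows "r \<in> f C P \<Longrightarrow> restrict_axis a r \<in> f (C - {a}) (remove_cand a P)"
    and "r' \<in> f (C - {a}) (remove_cand a P) \<Longrightarrow> \<exists>r\<in>f C P. restrict_axis a r = r'"
  using assms unfolding resistant_to_cloning_def by blast+

lemma resistant_interval_cost_h_le_hs:
  fixes f :: "'c set \<Rightarrow> 'c set list \<Rightarrow> 'c rel set"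
  assumes resistant: "resistant_to_cloning f"
    and scoring: "\<And>P. profile_over C P \<Longrightarrow> f C P = scoring_rule (interval_cost C hs h) C P"
    and pos: "0 < hs" "0 < h"
    and distinct: "distinct (a # u # x # y1 # y2 # y3 # rest)"
    and C: "set (a # u # x # y1 # y2 # y3 # rest) = C"
  shows "h \<le> hs"
proof (rule ccontr)
  assume "\<not> h \<le> hs"
  then have min: "min hs h = hs" by simp
  let ?cost = "\<lambda>P r. \<Sum>A\<leftarrow>P. interval_cost C hs h A r"
  define Q1 where "Q1 = path_profile {x, a, y1, y3} y1 y2 y3"
  define Q2 where "Q2 = path_profile {x, y1, y3} y1 y2 y3"
  define L1 where "L1 = a # u # rest @ [x, y1, y2, y3]"
  define L2 where "L2 = x # a # u # rest @ [y1, y2, y3]"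
  have L: "distinct L1" "set L1 = C" "distinct L2" "set L2 = C"
    using distinct C unfolding L1_def L2_def by auto
  have "finite C" using C by blast
  have Q_profiles: "profile_over C Q1" "profile_over C Q2"
    using C unfolding Q1_def Q2_def path_profile_def profile_over_def by auto
  have w1_opt: "list_axis L1 \<in> f C Q1"
  proof -
    have "?cost Q1 (list_axis L1) \<le> hs"
      unfolding Q1_def
    proof (rule path_profile_cost_le)
      show "is_interval {y1, y2} (list_axis L1)" "is_interval {y2, y3} (list_axis L1)"
        using is_interval_list_axis_consecutive[of "a # u # rest @ [x]" y1 y2 "[y3]"]
          is_interval_list_axis_consecutive[of "a # u # rest @ [x, y1]" y2 y3 "[]"] L(1)
        unfolding L1_def by simp_all
      show "is_leftmost C (list_axis L1) a"
        using is_leftmost_list_axis[of a "u # rest @ [x, y1, y2, y3]"] L(1,2) unfolding L1_def by simp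
      show "is_rightmost C (list_axis L1) y3"
        using is_rightmost_list_axis[of "a # u # rest @ [x, y1, y2]" y3] L(1,2) unfolding L1_def by simp
    qed (use pos in auto)
    moreover have "hs \<le> ?cost Q1 r" if "r \<in> axes C" for r
      using path_profile_cost_ge_min[OF that, of y1 y2 y3 "{x, a, y1, y3}" hs h] distinct C pos min
      unfolding Q1_def by auto
    ultimately show ?thesis
      using scoring[OF Q_profiles(1)] list_axis_in_axes[OF L(1)] L(2)
      unfolding scoring_rule_def by force
  qed
  have clones: "clones Q1 a x" "clones Q2 a u"
    and same_reduction: "remove_cand a Q1 = remove_cand a Q2"
    using distinct unfolding clones_def remove_cand_def Q1_def Q2_def path_profile_def by auto
  have "restrict_axis a (list_axis L1) \<in> f (C - {a}) (remove_cand a Q2)"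
    using resistant_to_cloningD(1)[OF resistant \<open>finite C\<close> Q_profiles(1) _ _ _ clones(1) w1_opt]
      same_reduction distinct C by auto
  then obtain t where t: "t \<in> f C Q2" "restrict_axis a t = restrict_axis a (list_axis L1)"
    using resistant_to_cloningD(2)[OF resistant \<open>finite C\<close> Q_profiles(2) _ _ _ clones(2)]
      distinct C by auto
  have "h \<le> ?cost Q2 t"
    unfolding Q2_def
  proof (rule path_profile_cost_ge_h)
    have "(p, q) \<in> t" if "(p, q) \<in> list_axis L1" "p \<noteq> a" "q \<noteq> a" for p q
      using that t(2) mem_restrict_axis[of p q a] by metis
    then show "(y1, y2) \<in> t" "(y2, y3) \<in> t" "\<And>z. z \<in> {x, y1, y3} \<Longrightarrow> (u, z) \<in> t"
      using distinct unfolding L1_def by (auto simp: list_axis_append)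
  qed (use C distinct pos in auto)
  also have "?cost Q2 t \<le> ?cost Q2 (list_axis L2)"
    using t(1) scoring[OF Q_profiles(2)] list_axis_in_axes[OF L(3)] L(4)
    unfolding scoring_rule_def by auto
  also have "?cost Q2 (list_axis L2) \<le> hs"
    unfolding Q2_def
  proof (rule path_profile_cost_le)
    show "is_interval {y1, y2} (list_axis L2)" "is_interval {y2, y3} (list_axis L2)"
      using is_interval_list_axis_consecutive[of "x # a # u # rest" y1 y2 "[y3]"]
        is_interval_list_axis_consecutive[of "x # a # u # rest @ [y1]" y2 y3 "[]"] L(3)
      unfolding L2_def by simp_all
    show "is_leftmost C (list_axis L2) x"
      using is_leftmost_list_axis[of x "a # u # rest @ [y1, y2, y3]"] L(3,4) unfolding L2_def by simp
    show "is_rightmost C (list_axis L2) y3"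
      using is_rightmost_list_axis[of "x # a # u # rest @ [y1, y2]" y3] L(3,4) unfolding L2_def by simp
  qed (use pos in auto)
  finally show False
    using \<open>\<not> h \<le> hs\<close> by simp
qed

theorem mainTheorem17:
  fixes f :: "'c set \<Rightarrow> 'c set list \<Rightarrow> 'c rel set"
    and hs h :: "nat \<Rightarrow> real"
  assumes "infinite (UNIV :: 'c set)"
    and "resistant_to_cloning f"
    and "\<And>m. m \<ge> 3 \<Longrightarrow> hs m > 0 \<and> h m > 0"
    and "\<And>C P. finite C \<Longrightarrow> card C \<ge> 3 \<Longrightarrow> profile_over C P \<Longrightarrow>
           f C P = scoring_rule (interval_cost C (hs (card C)) (h (card C))) C P"
  shows "\<forall>m\<ge>6. hs m \<ge> h m"
proof (intro allI impI)
  fix m :: nat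
  assume "6 \<le> m"
  obtain C :: "'c set" where C: "finite C" "card C = m"
    using infinite_arbitrarily_large[OF assms(1)] by blast
  obtain xs where xs: "distinct xs" "set xs = C"
    using finite_distinct_list[OF C(1)] by blast
  have "6 \<le> length xs"
    using xs C \<open>6 \<le> m\<close> distinct_card by metis
  then obtain a u x y1 y2 y3 rest where xs_eq: "xs = a # u # x # y1 # y2 # y3 # rest"
    by (auto simp: Suc_le_length_iff numeral_eq_Suc)
  have scoring: "f C P = scoring_rule (interval_cost C (hs m) (h m)) C P" if "profile_over C P" for P
    using assms(4)[OF C(1) _ that] C(2) \<open>6 \<le> m\<close> by simp
  show "h m \<le> hs m"
    using resistant_interval_cost_h_le_hs[OF assms(2) scoring] assms(3)[of m] xs xs_eq \<open>6 \<le> m\<close>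
    by simp
qed

end
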